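(* Let $A,B\in\mathbb{C}^{n\times n}$ be sectorial. Then $I+AB$ is invertible if there exists $\theta\in[0,\pi)\cap\Psi(A)$ such that $$\gamma_\theta(A)\,\bar\sigma(B)<1\quad\text{and}\quad\Psi(B)\subset(-\pi+\theta,\ \pi-\theta).$$
   Context: $\bar\sigma$: largest singular value. $A$ is sectorial if $0\notin\{x^*Ax:\|x\|=1\}$; then $A=T^*DT$, $T$ nonsingular, $D$ diagonal unitary, and the phases $\bar\phi(A)\ge\dots\ge\underline\phi(A)$ are the arguments of the diagonal entries of $D$ with $\bar\phi-\underline\phi<\pi$ and $(\bar\phi+\underline\phi)/2\in(-\pi,\pi]$; $\Psi(A)=[\underline\phi(A),\bar\phi(A)]$. $\mathcal{DW}(A)=\{(\mathrm{Re}\,x^*Ax,\mathrm{Im}\,x^*Ax,\|Ax\|^2):\|x\|=1\}$. For sectorial $A$ and $\theta\in[0,\pi)\cap\Psi(A)$: $\mathcal{R}_{\ge\theta}(A)=\{h\ge0:\exists z\in\mathbb{C},\ \angle z\notin(-\theta,\theta),\ (\mathrm{Re}\,z,\mathrm{Im}\,z,h^2)\in\mathcal{DW}(A)\}$ ($\angle z\in(-\pi,\pi]$) and $\gamma_\theta(A)=\max\mathcal{R}_{\ge\theta}(A)$. *)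

theory Defs
  imports "HOL-Analysis.Analysis"
begin

type_synonym 'n cmat = "complex^'n^'n"

definition cadj :: "'n::finite cmat \<Rightarrow> 'n cmat" where
  "cadj T = (\<chi> i j. cnj (T $ j $ i))"

definition cdiag :: "('n::finite \<Rightarrow> complex) \<Rightarrow> 'n cmat" where
  "cdiag d = (\<chi> i j. if i = j then d i else 0)"

definition cinner :: "complex^'n::finite \<Rightarrow> complex^'n \<Rightarrow> complex" where
  "cinner x y = (\<Sum>i\<in>UNIV. cnj (x $ i) * y $ i)"

definition num_range :: "'n::finite cmat \<Rightarrow> complex set" where
  "num_range A = {cinner x (A *v x) | x. norm x = 1}"

definition sectorial :: "'n::finite cmat \<Rightarrow> bool" where
  "sectorial A \<longleftrightarrow> 0 \<notin> num_range A"

text \<open>Largest singular value = spectral (operator 2-) norm.\<close>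
definition sigma_max :: "'n::finite cmat \<Rightarrow> real" where
  "sigma_max B = onorm (\<lambda>x. B *v x)"

definition sect_decomp_phases :: "'n::finite cmat \<Rightarrow> real \<Rightarrow> real \<Rightarrow> bool" where
  "sect_decomp_phases A lo hi \<longleftrightarrow>
     (\<exists>T (phi :: 'n \<Rightarrow> real).
        invertible T \<and> A = cadj T ** cdiag (\<lambda>k. cis (phi k)) ** T \<and>
        hi = Max (range phi) \<and> lo = Min (range phi) \<and>
        hi - lo < pi \<and> -pi < (hi + lo) / 2 \<and> (hi + lo) / 2 \<le> pi)"

definition phase_max :: "'n::finite cmat \<Rightarrow> real" where
  "phase_max A = snd (SOME p. sect_decomp_phases A (fst p) (snd p))"

definition phase_min :: "'n::finite cmat \<Rightarrow> real" where
  "phase_min A = fst (SOME p. sect_decomp_phases A (fst p) (snd p))"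

definition Psi :: "'n::finite cmat \<Rightarrow> real set" where
  "Psi A = {phase_min A .. phase_max A}"

definition DW :: "'n::finite cmat \<Rightarrow> (real \<times> real \<times> real) set" where
  "DW A = {(Re (cinner x (A *v x)), Im (cinner x (A *v x)), (norm (A *v x))^2) | x. norm x = 1}"

definition R_ge :: "real \<Rightarrow> 'n::finite cmat \<Rightarrow> real set" where
  "R_ge \<theta> A = {h. h \<ge> 0 \<and> (\<exists>z. Arg z \<notin> {-\<theta><..<\<theta>} \<and> (Re z, Im z, h^2) \<in> DW A)}"

text \<open>gamma_theta(A) = max R_ge theta A (the set is compact, so its sup is its max).\<close>
definition gamma :: "real \<Rightarrow> 'n::finite cmat \<Rightarrow> real" where
  "gamma \<theta> A = Sup (R_ge \<theta> A)"

end

theory Submission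
  imports Defs
begin

text \<open>Suppose \<open>(I + AB) x = 0\<close> with \<open>x \<noteq> 0\<close>, scaled so that \<open>y = Bx\<close> is a unit vector; then
  \<open>Ay = -x\<close> and \<open>x* B x = - cnj (y* A y)\<close>. If the argument of \<open>z = y* A y\<close> lies outside
  \<open>(-\<theta>, \<theta>)\<close>, then \<open>|x| = |Ay| \<le> \<gamma>\<^sub>\<theta>(A)\<close>, whence \<open>1 = |Bx| \<le> \<sigma>(B) \<gamma>\<^sub>\<theta>(A) < 1\<close>. Otherwise
  \<open>- cnj z\<close> has argument in \<open>(\<pi> - \<theta>, \<pi> + \<theta>)\<close>, whereas for \<open>B = T* D T\<close> the value
  \<open>x* B x = \<Sum>\<^sub>k |(Tx)\<^sub>k|\<^sup>2 D\<^sub>k\<^sub>k\<close> is a nonnegative combination of unit vectors whose phases lie in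
  \<open>\<Psi>(B) \<subseteq> (-\<pi> + \<theta>, \<pi> - \<theta>)\<close>, so its argument lies there as well: a contradiction.

  As the phases are defined by choice, the sectorial decomposition has to be constructed. By
  the Toeplitz--Hausdorff theorem and separation from \<open>0\<close>, a rotation \<open>\<mu>B\<close> of a sectorial
  matrix has positive definite Hermitian part. Such a matrix \<open>G\<close> is congruent to a diagonal
  one: choose the columns one by one, each maximising \<open>Im q / Re q\<close> (\<open>q\<close> the quadratic form
  of \<open>G\<close>) on the \<open>Re\<close>-orthogonal complement of the previous ones. Rescaling the diagonal to
  unit modulus gives \<open>B = T* D T\<close>.\<close>

section \<open>Sesquilinear forms, adjoints and diagonal matrices\<close>

abbreviation qform :: "'n::finite cmat \<Rightarrow> complex^'n \<Rightarrow> complex" where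
  "qform M x \<equiv> cinner x (M *v x)"

lemma scaleR_eq_smult_of_real: "r *\<^sub>R (x::complex^'n::finite) = of_real r *s x"
  unfolding vec_eq_iff vector_scaleR_component by (simp add: scaleR_conv_of_real)

lemma cinner_add_right: "cinner x (y + z) = cinner x y + cinner x z"
  by (simp add: cinner_def distrib_left sum.distrib)

lemma cinner_add_left: "cinner (x + y) z = cinner x z + cinner y z"
  by (simp add: cinner_def distrib_right sum.distrib)

lemma cinner_diff_right: "cinner x (y - z) = cinner x y - cinner x z"
  by (simp add: cinner_def right_diff_distrib sum_subtractf)

lemma cinner_minus_left: "cinner (- x) y = - cinner x y"
  by (simp add: cinner_def sum_negf)

lemma cinner_smult_right: "cinner x (c *s y) = c * cinner x y"
  by (simp add: cinner_def sum_distrib_left algebra_simps)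

lemma cinner_smult_left: "cinner (c *s x) y = cnj c * cinner x y"
  by (simp add: cinner_def sum_distrib_left algebra_simps)

lemma cinner_scaleR_right: "cinner x (r *\<^sub>R y) = of_real r * cinner x y"
  by (simp add: scaleR_eq_smult_of_real cinner_smult_right)

lemma cinner_scaleR_left: "cinner (r *\<^sub>R x) y = of_real r * cinner x y"
  by (simp add: scaleR_eq_smult_of_real cinner_smult_left)

lemma cnj_cinner: "cnj (cinner x y) = cinner y x"
  by (simp add: cinner_def mult.commute)

lemma cinner_self: "cinner x x = of_real ((norm x)\<^sup>2)"
proof -
  have "(norm x)\<^sup>2 = (\<Sum>i\<in>UNIV. (norm (x$i))\<^sup>2)"
    by (simp add: norm_vec_def L2_set_def sum_nonneg)
  then have "of_real ((norm x)\<^sup>2) = (\<Sum>i\<in>UNIV. of_real ((norm (x$i))\<^sup>2) :: complex)"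
    by simp
  also have "\<dots> = cinner x x"
    unfolding cinner_def
    by (rule sum.cong) (auto simp: complex_norm_square mult.commute simp del: of_real_power)
  finally show ?thesis by simp
qed

lemma cinner_cadj: "cinner x (M *v y) = cinner (cadj M *v x) y"
proof -
  have "cinner x (M *v y) = (\<Sum>i\<in>UNIV. \<Sum>j\<in>UNIV. cnj (x$i) * M$i$j * y$j)"
    unfolding cinner_def matrix_vector_mult_def by (simp add: sum_distrib_left mult.assoc)
  also have "\<dots> = (\<Sum>j\<in>UNIV. \<Sum>i\<in>UNIV. cnj (x$i) * M$i$j * y$j)"
    by (rule sum.swap)
  also have "\<dots> = cinner (cadj M *v x) y"
    unfolding cinner_def matrix_vector_mult_def cadj_def
    by (simp add: sum_distrib_right sum_distrib_left cnj_sum mult_ac)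
  finally show ?thesis .
qed

lemma continuous_on_qform [continuous_intros]: "continuous_on S (qform M)"
  unfolding cinner_def by (intro continuous_intros)

lemma matrix_vector_mult_smult: "M *v (c *s x) = c *s (M *v (x::complex^'n::finite))"
  by (simp add: vec_eq_iff matrix_vector_mult_def sum_distrib_left algebra_simps)

lemma matrix_vector_mult_scaleR_complex: "M *v (r *\<^sub>R x) = r *\<^sub>R (M *v (x::complex^'n::finite))"
  by (simp add: scaleR_eq_smult_of_real matrix_vector_mult_smult)

lemma norm_smult_unimodular:
  assumes "cmod \<omega> = 1" shows "norm (\<omega> *s (y::complex^'n::finite)) = norm y"
proof -
  have "of_real ((norm (\<omega> *s y))\<^sup>2) = (of_real ((norm y)\<^sup>2) :: complex)"
    unfolding cinner_self[symmetric] cinner_smult_left cinner_smult_right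
    using assms by (simp add: mult.assoc[symmetric] complex_norm_square[symmetric] mult.commute)
  then have "(norm (\<omega> *s y))\<^sup>2 = (norm y)\<^sup>2"
    using of_real_eq_iff by blast
  then show ?thesis by (simp add: power2_eq_iff_nonneg)
qed

lemma qform_lincomb:
  "qform G (s *\<^sub>R x + t *\<^sub>R y) =
     of_real s * of_real s * qform G x + of_real s * of_real t * (cinner x (G *v y) + cinner y (G *v x))
     + of_real t * of_real t * qform G y"
  by (simp add: cinner_add_left cinner_add_right cinner_scaleR_left cinner_scaleR_right
      matrix_vector_right_distrib matrix_vector_mult_scaleR_complex algebra_simps)

lemma qform_add_scaleR:
  "qform G (x + t *\<^sub>R y) =
     qform G x + of_real t * (cinner x (G *v y) + cinner y (G *v x)) + of_real t * of_real t * qform G y"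
  using qform_lincomb[where s=1] by simp

lemma qform_scaleR: "qform G (c *\<^sub>R y) = of_real (c\<^sup>2) * qform G y"
  using qform_lincomb[where s=c and t=0] by (simp add: power2_eq_square)

lemma qform_smult: "qform G (c *s y) = cnj c * c * qform G y"
  by (simp add: matrix_vector_mult_smult cinner_smult_left cinner_smult_right)

lemma cadj_mult: "cadj (M ** N) = cadj N ** cadj M"
  by (simp add: cadj_def vec_eq_iff matrix_matrix_mult_def cnj_sum mult.commute)

lemma cdiag_mult: "cdiag a ** cdiag b = cdiag (\<lambda>k. a k * b k)"
  by (simp add: vec_eq_iff cdiag_def matrix_matrix_mult_def mult_delta_left mult_delta_right)

lemma cdiag_one: "cdiag (\<lambda>k. 1) = mat 1"
  by (simp add: vec_eq_iff cdiag_def mat_def)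

lemma cadj_cdiag: "cadj (cdiag d) = cdiag (\<lambda>k. cnj (d k))"
  by (simp add: vec_eq_iff cdiag_def cadj_def)

lemma cdiag_const_commute: "cdiag (\<lambda>_. c) ** M = M ** cdiag (\<lambda>_. c)"
  by (simp add: vec_eq_iff cdiag_def matrix_matrix_mult_def mult_delta_left mult_delta_right mult.commute)

lemma cdiag_const_mult_vector: "cdiag (\<lambda>_. c) ** M *v x = c *s (M *v x)"
  by (simp add: vec_eq_iff cdiag_def matrix_matrix_mult_def matrix_vector_mult_def mult_delta_left
      sum_distrib_left mult.assoc)

lemma invertible_cdiag: "(\<And>k. d k \<noteq> 0) \<Longrightarrow> invertible (cdiag d)"
  unfolding invertible_def
  by (rule exI[of _ "cdiag (\<lambda>k. 1 / d k)"]) (simp add: cdiag_mult cdiag_one)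

lemma invertible_iff_trivial_kernel:
  "invertible (M::'a::field^'n::finite^'n) \<longleftrightarrow> (\<forall>x. M *v x = 0 \<longrightarrow> x = 0)"
  by (simp add: invertible_left_inverse matrix_left_invertible_ker)

lemma cadj_mult_mult_columns:
  "(cadj (\<chi> i j. v j $ i) ** M ** (\<chi> i j. v j $ i)) $ i $ j = cinner (v i) (M *v v j)"
proof -
  have "(cadj (\<chi> i j. v j $ i) ** M ** (\<chi> i j. v j $ i)) $ i $ j =
      (\<Sum>k\<in>UNIV. \<Sum>l\<in>UNIV. cnj (v i $ l) * M $ l $ k * v j $ k)"
    by (simp add: cadj_def matrix_matrix_mult_def sum_distrib_right)
  also have "\<dots> = (\<Sum>l\<in>UNIV. \<Sum>k\<in>UNIV. cnj (v i $ l) * M $ l $ k * v j $ k)"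
    by (rule sum.swap)
  also have "\<dots> = cinner (v i) (M *v v j)"
    by (simp add: cinner_def matrix_vector_mult_def sum_distrib_left mult.assoc)
  finally show ?thesis .
qed

lemma cadj_cadj [simp]: "cadj (cadj M) = M"
  by (simp add: cadj_def vec_eq_iff)

lemma cadj_mat_one: "cadj (mat 1) = mat 1"
  by (simp add: cadj_def vec_eq_iff mat_def)

lemma qform_cdiag: "qform (cdiag d) w = (\<Sum>k\<in>UNIV. of_real ((cmod (w$k))\<^sup>2) * d k)"
proof -
  have "cdiag d *v w = (\<chi> k. d k * w $ k)"
    by (simp add: cdiag_def matrix_vector_mult_def vec_eq_iff mult_delta_left)
  then show ?thesis
    unfolding cinner_def
    by (intro sum.cong) (auto simp: complex_norm_square mult_ac simp del: of_real_power)
qed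

section \<open>The numerical range\<close>

lemma exists_unimodular_real_rotation:
  "\<exists>\<omega>. cmod \<omega> = 1 \<and> Im (\<omega> * c1 + cnj \<omega> * c2) = 0"
proof -
  define d where "d = c1 - cnj c2"
  define \<omega> where "\<omega> = (if d = 0 then 1 else cnj d / of_real (cmod d))"
  have "cmod \<omega> = 1" by (simp add: \<omega>_def norm_divide)
  moreover have "cnj d * d = of_real ((cmod d)\<^sup>2)"
    by (simp add: complex_norm_square mult.commute del: of_real_power)
  then have "\<omega> * d \<in> \<real>"
    by (auto simp: \<omega>_def)
  then have "Im (\<omega> * c1 + cnj \<omega> * c2) = 0"
    by (simp add: complex_is_Real_iff d_def algebra_simps)
  ultimately show ?thesis by blast
qed

text \<open>The core of the Toeplitz--Hausdorff theorem: after rotating \<open>y\<close> by a phase that makes the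
  cross term real, the quadratic form is real along the segment from \<open>x\<close> to \<open>y\<close>, and the
  intermediate value theorem applies.\<close>
lemma qform_attains_unit_interval:
  fixes C :: "complex^'n::finite^'n"
  assumes nx: "norm x = 1" and ny: "norm y = 1" and Cx: "qform C x = 0" and Cy: "qform C y = 1"
    and t: "0 \<le> t" "t \<le> 1"
  shows "\<exists>z. norm z = 1 \<and> qform C z = of_real t"
proof -
  obtain \<omega> where \<omega>: "cmod \<omega> = 1" and real_cross: "Im (\<omega> * cinner x (C *v y) + cnj \<omega> * cinner y (C *v x)) = 0"
    using exists_unimodular_real_rotation by blast
  define y' where "y' = \<omega> *s y"
  have ny': "norm y' = 1" unfolding y'_def by (simp add: norm_smult_unimodular[OF \<omega>] ny)
  have Cy': "qform C y' = 1"
    using \<omega> Cy by (simp add: y'_def qform_smult complex_norm_square[symmetric] mult.commute)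
  define \<kappa> where "\<kappa> = Re (cinner x (C *v y') + cinner y' (C *v x))"
  have cross: "cinner x (C *v y') + cinner y' (C *v x) = of_real \<kappa>"
    using real_cross
    by (simp add: \<kappa>_def complex_eq_iff y'_def matrix_vector_mult_smult cinner_smult_left cinner_smult_right)
  define p where "p s = (1 - s) *\<^sub>R x + s *\<^sub>R y'" for s :: real
  have qp: "qform C (p s) = of_real ((1 - s) * s * \<kappa> + s\<^sup>2)" for s
    unfolding p_def qform_lincomb Cx Cy' cross by (simp add: power2_eq_square)
  have p0: "p s \<noteq> 0" for s
  proof
    assume "p s = 0"
    then have e: "(1 - s) *\<^sub>R x = - (s *\<^sub>R y')" by (simp add: p_def eq_neg_iff_add_eq_0)
    then have "norm ((1 - s) *\<^sub>R x) = norm (s *\<^sub>R y')" by (metis norm_minus_cancel)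
    then have "\<bar>1 - s\<bar> = \<bar>s\<bar>" using nx ny' by simp
    then have "s = 1/2" by linarith
    with e have "(1/2::real) *\<^sub>R x = (1/2::real) *\<^sub>R (- y')" by simp
    then have "x = - y'" by (simp only: scaleR_cancel_left) simp
    then show False using Cx Cy' qform_scaleR[where G=C and c="-1" and y=y'] by simp
  qed
  define g where "g s = ((1 - s) * s * \<kappa> + s\<^sup>2) / (norm (p s))\<^sup>2" for s
  have "continuous_on {0..1} g"
    unfolding g_def p_def using p0 by (intro continuous_intros) (simp add: p_def)
  moreover have "g 0 = 0" "g 1 = 1" by (simp_all add: g_def p_def ny')
  ultimately obtain s where "g s = t"
    using IVT'[of g 0 t 1] t by auto
  define z where "z = (1 / norm (p s)) *\<^sub>R p s"
  have "qform C z = of_real ((1 / norm (p s))\<^sup>2 * ((1 - s) * s * \<kappa> + s\<^sup>2))"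
    by (simp only: z_def qform_scaleR qp of_real_mult)
  moreover have "(1 / norm (p s))\<^sup>2 * ((1 - s) * s * \<kappa> + s\<^sup>2) = t"
    using \<open>g s = t\<close> by (simp add: g_def power_divide)
  ultimately have "qform C z = of_real t" by (simp only:)
  moreover have "norm z = 1" using p0[of s] by (simp add: z_def)
  ultimately show ?thesis by blast
qed

lemma qform_shift_scale:
  fixes B :: "complex^'n::finite^'n"
  assumes "norm u = 1"
  shows "qform (\<chi> i j. (B$i$j - (if i = j then a else 0)) / d) u = (qform B u - a) / d"
proof -
  have "(\<chi> i j. (B$i$j - (if i = j then a else 0)) / d) *v u = (1/d) *s (B *v u - a *s u)"
    by (simp add: vec_eq_iff matrix_vector_mult_def sum_divide_distrib[symmetric]
        left_diff_distrib sum_subtractf field_simps mult_delta_right, simp add: add_divide_distrib[symmetric])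
  then show ?thesis
    using assms by (simp add: cinner_smult_right cinner_diff_right cinner_self diff_divide_distrib)
qed

lemma num_range_convex: "convex (num_range (B::complex^'n::finite^'n))"
  unfolding convex_alt
proof (intro ballI allI impI)
  fix a b and t :: real
  assume "a \<in> num_range B" "b \<in> num_range B" and t: "0 \<le> t \<and> t \<le> 1"
  then obtain x y where x: "norm x = 1" "a = qform B x" and y: "norm y = 1" "b = qform B y"
    by (auto simp: num_range_def)
  have "\<exists>z. (1 - t) *\<^sub>R a + t *\<^sub>R b = qform B z \<and> norm z = 1"
  proof (cases "a = b")
    case True
    then show ?thesis using x by (auto simp: scaleR_conv_of_real algebra_simps intro!: exI[of _ x])
  next
    case False
    define C :: "complex^'n^'n" where "C = (\<chi> i j. (B$i$j - (if i = j then a else 0)) / (b - a))"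
    have "qform C x = 0" "qform C y = 1"
      using x y False by (simp_all add: C_def qform_shift_scale)
    then obtain z where z: "norm z = 1" "qform C z = of_real t"
      using qform_attains_unit_interval x(1) y(1) t by blast
    then have "qform B z = a + of_real t * (b - a)"
      using False by (simp add: C_def qform_shift_scale field_simps)
    then show ?thesis using z(1) by (auto simp: scaleR_conv_of_real algebra_simps intro!: exI[of _ z])
  qed
  then show "(1 - t) *\<^sub>R a + t *\<^sub>R b \<in> num_range B"
    unfolding num_range_def by blast
qed

lemma num_range_closed: "closed (num_range B)"
proof -
  have "num_range B = qform B ` sphere 0 1" by (auto simp: num_range_def)
  then show ?thesis
    by (metis compact_imp_closed compact_continuous_image compact_sphere continuous_on_qform)
qed

lemma sectorial_rotation_pos_definite:
  fixes B :: "complex^'n::finite^'n"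
  assumes "sectorial B"
  shows "\<exists>\<mu>. \<forall>x. x \<noteq> 0 \<longrightarrow> Re (\<mu> * qform B x) > 0"
proof -
  have "0 \<notin> num_range B" using assms by (simp add: sectorial_def)
  from separating_hyperplane_closed_0[OF num_range_convex num_range_closed this]
  obtain a :: complex and b where "0 < b" "\<forall>z\<in>num_range B. inner a z > b" by blast
  then have unit: "Re (cnj a * qform B y) > 0" if "norm y = 1" for y
    using that by (fastforce simp: num_range_def inner_complex_def)
  have "Re (cnj a * qform B x) > 0" if "x \<noteq> 0" for x
  proof -
    define y where "y = (1 / norm x) *\<^sub>R x"
    have "x = norm x *\<^sub>R y" using that by (simp add: y_def)
    then have "qform B x = of_real ((norm x)\<^sup>2) * qform B y"
      by (metis qform_scaleR)
    then have "Re (cnj a * qform B x) = (norm x)\<^sup>2 * Re (cnj a * qform B y)"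
      by (simp add: algebra_simps)
    also have "\<dots> > 0" using unit[of y] that by (simp add: y_def)
    finally show ?thesis .
  qed
  then show ?thesis by blast
qed

section \<open>Congruence diagonalisation\<close>

lemma exists_nonzero_orthogonal:
  fixes u :: "'n::finite \<Rightarrow> complex^'n"
  assumes "S \<noteq> UNIV"
  shows "\<exists>w. w \<noteq> 0 \<and> (\<forall>j\<in>S. cinner (u j) w = 0)"
proof -
  from assms obtain a where a: "a \<notin> S" by blast
  define M :: "complex^'n^'n" where "M = (\<chi> j k. if j \<in> S then cnj (u j $ k) else 0)"
  have "row a M = 0" using a by (simp add: M_def row_def vec_eq_iff)
  then have "\<not> invertible M"
    by (metis det_zero_row(1) invertible_det_nz row_def vec_lambda_eta)
  then obtain w where "M *v w = 0" "w \<noteq> 0" by (auto simp: invertible_iff_trivial_kernel)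
  moreover have "cinner (u j) w = (M *v w) $ j" if "j \<in> S" for j
    using that by (simp add: M_def cinner_def matrix_vector_mult_def)
  ultimately show ?thesis by auto
qed

lemma quadratic_nonpos_linear_coeff_zero:
  fixes a q :: real assumes "\<And>t. 2*t*a + t\<^sup>2*q \<le> 0" shows "a = 0"
proof (rule ccontr)
  assume a0: "a \<noteq> 0"
  define M where "M = \<bar>q\<bar> + 1"
  have M: "M > 0" "2*M + q > 0" by (auto simp: M_def)
  have "2*(a/M)*a + (a/M)\<^sup>2*q = (a\<^sup>2 / M\<^sup>2) * (2*M + q)"
    using M by (simp add: field_simps power2_eq_square)
  also have "\<dots> > 0" using M a0 by (intro mult_pos_pos) auto
  finally show False using assms[of "a/M"] by simp
qed

definition re_form :: "'n::finite cmat \<Rightarrow> complex^'n \<Rightarrow> complex^'n \<Rightarrow> complex" where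
  "re_form G x y = (cinner x (G *v y) + cnj (cinner y (G *v x))) / 2"

definition im_form :: "'n::finite cmat \<Rightarrow> complex^'n \<Rightarrow> complex^'n \<Rightarrow> complex" where
  "im_form G x y = (cinner x (G *v y) - cnj (cinner y (G *v x))) / (2 * \<i>)"

lemma cinner_eq_re_form_im_form: "cinner x (G *v y) = re_form G x y + \<i> * im_form G x y"
  by (simp add: re_form_def im_form_def field_simps)

lemma re_form_swap: "re_form G y x = cnj (re_form G x y)"
  by (simp add: re_form_def)

lemma im_form_swap: "im_form G y x = cnj (im_form G x y)"
  by (simp add: im_form_def field_simps)

lemma re_form_add_right: "re_form G x (y + z) = re_form G x y + re_form G x z"
  by (simp add: re_form_def cinner_add_right cinner_add_left matrix_vector_right_distrib field_simps)

lemma re_form_smult_right: "re_form G x (c *s y) = c * re_form G x y"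
  by (simp add: re_form_def cinner_smult_right cinner_smult_left matrix_vector_mult_smult field_simps)

lemma im_form_smult_right: "im_form G x (c *s y) = c * im_form G x y"
  by (simp add: im_form_def cinner_smult_right cinner_smult_left matrix_vector_mult_smult field_simps)

lemma re_form_eq_cinner: "re_form G u w = cinner ((1/2 :: complex) *s (cadj G *v u + G *v u)) w"
  by (simp add: re_form_def cinner_smult_left cinner_add_left cinner_cadj[symmetric] cnj_cinner)

lemma ratio_maximiser:
  fixes G :: "complex^'n::finite^'n"
  assumes pos: "\<And>x. x \<noteq> 0 \<Longrightarrow> Re (qform G x) > 0"
    and W: "closed W" "w1 \<in> W" "w1 \<noteq> 0" "\<And>r x. x \<in> W \<Longrightarrow> r *\<^sub>R x \<in> W"
  shows "\<exists>v\<in>W. v \<noteq> 0 \<and> (\<exists>m. Im (qform G v) = m * Re (qform G v) \<and>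
                                 (\<forall>w\<in>W. Im (qform G w) \<le> m * Re (qform G w)))"
proof -
  define X where "X = W \<inter> sphere 0 1"
  define f where "f x = Im (qform G x) / Re (qform G x)" for x
  have "compact X" unfolding X_def by (intro closed_Int_compact W compact_sphere)
  moreover have "(1 / norm w1) *\<^sub>R w1 \<in> X" using W by (simp add: X_def)
  moreover have "continuous_on X f"
    unfolding f_def
  proof (intro continuous_intros ballI)
    show "Re (qform G x) \<noteq> 0" if "x \<in> X" for x
      using pos[of x] that by (fastforce simp: X_def)
  qed
  ultimately obtain v where v: "v \<in> X" and max: "\<And>y. y \<in> X \<Longrightarrow> f y \<le> f v"
    using continuous_attains_sup[of X f] by blast
  have "Im (qform G w) \<le> f v * Re (qform G w)" if "w \<in> W" for w
  proof (cases "w = 0")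
    case False
    have "f w = f ((1 / norm w) *\<^sub>R w)"
      using False by (simp add: f_def qform_scaleR)
    also have "\<dots> \<le> f v" using that False W by (intro max) (simp add: X_def)
    finally show ?thesis using pos[OF False] by (simp add: f_def divide_le_eq mult.commute)
  qed (simp add: cinner_def)
  moreover have "v \<in> W" "v \<noteq> 0" using v by (auto simp: X_def)
  moreover have "Im (qform G v) = f v * Re (qform G v)"
    using pos[OF \<open>v \<noteq> 0\<close>] by (simp add: f_def)
  ultimately show ?thesis by blast
qed

text \<open>The vector is a maximiser of \<open>Im q / Re q\<close> on \<open>W\<close>. There the first variation of
  \<open>Im q - m Re q\<close> in a direction \<open>w\<close> with \<open>re_form G v w = 0\<close> is \<open>2 Re (im_form G v w)\<close> and must
  vanish; the directions \<open>w\<close> and \<open>i w\<close> together give \<open>im_form G v w = 0\<close>.\<close>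
lemma extremal_vector:
  fixes G :: "complex^'n::finite^'n"
  assumes pos: "\<And>x. x \<noteq> 0 \<Longrightarrow> Re (qform G x) > 0"
    and W: "closed W" "w1 \<in> W" "w1 \<noteq> 0"
    and W_add: "\<And>x y. x \<in> W \<Longrightarrow> y \<in> W \<Longrightarrow> x + y \<in> W"
    and W_smult: "\<And>c x. x \<in> W \<Longrightarrow> c *s x \<in> W"
  shows "\<exists>v\<in>W. v \<noteq> 0 \<and> (\<forall>w\<in>W. re_form G v w = 0 \<longrightarrow> im_form G v w = 0)"
proof -
  have W_scaleR: "r *\<^sub>R x \<in> W" if "x \<in> W" for r x
    using W_smult[OF that] by (simp add: scaleR_eq_smult_of_real)
  obtain v m where v: "v \<in> W" "v \<noteq> 0" and v_eq: "Im (qform G v) - m * Re (qform G v) = 0"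
    and bound: "\<And>w. w \<in> W \<Longrightarrow> Im (qform G w) - m * Re (qform G w) \<le> 0"
    using ratio_maximiser[OF pos W W_scaleR] by fastforce
  have Re_im_form: "Re (im_form G v w) = 0" if w: "w \<in> W" and re0: "re_form G v w = 0" for w
  proof -
    define k where "k = im_form G v w"
    have cross: "cinner v (G *v w) + cinner w (G *v v) = \<i> * of_real (2 * Re k)"
      using re0 cinner_eq_re_form_im_form[of w G v] cinner_eq_re_form_im_form[of v G w]
      by (simp add: re_form_swap[of G w v] im_form_swap[of G w v] k_def complex_eq_iff)
    have "2 * t * Re k + t\<^sup>2 * (Im (qform G w) - m * Re (qform G w)) \<le> 0" for t
    proof -
      have "Im (qform G (v + t *\<^sub>R w)) - m * Re (qform G (v + t *\<^sub>R w)) \<le> 0"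
        using v w by (intro bound W_add W_scaleR)
      also have "Im (qform G (v + t *\<^sub>R w)) - m * Re (qform G (v + t *\<^sub>R w)) =
          (Im (qform G v) - m * Re (qform G v)) + 2 * t * Re k
          + t\<^sup>2 * (Im (qform G w) - m * Re (qform G w))"
        unfolding qform_add_scaleR cross by (simp add: algebra_simps power2_eq_square)
      finally show ?thesis using v_eq by simp
    qed
    then show ?thesis using quadratic_nonpos_linear_coeff_zero k_def by blast
  qed
  have "im_form G v w = 0" if "w \<in> W" "re_form G v w = 0" for w
  proof -
    have "Re (im_form G v (\<i> *s w)) = 0"
      using that by (intro Re_im_form W_smult) (simp_all add: re_form_smult_right)
    then show ?thesis using Re_im_form[OF that] by (simp add: im_form_smult_right complex_eq_iff)
  qed
  then show ?thesis using v by blast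
qed

text \<open>The last clause is the invariant that makes the greedy construction work: a vector chosen
  in the \<open>re_form\<close>-orthogonal complement of the family is then automatically
  \<open>im_form\<close>-orthogonal to it.\<close>
definition congruence_family :: "'n::finite cmat \<Rightarrow> 'n set \<Rightarrow> ('n \<Rightarrow> complex^'n) \<Rightarrow> bool" where
  "congruence_family G S v \<longleftrightarrow> (\<forall>i\<in>S. v i \<noteq> 0) \<and>
     (\<forall>i\<in>S. \<forall>j\<in>S. i \<noteq> j \<longrightarrow> re_form G (v i) (v j) = 0 \<and> im_form G (v i) (v j) = 0) \<and>
     (\<forall>i\<in>S. \<forall>w. (\<forall>j\<in>S. re_form G (v j) w = 0) \<longrightarrow> im_form G (v i) w = 0)"

lemma congruence_family_extend:
  assumes fam: "congruence_family G S v" and a: "a \<notin> S"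
    and v0: "v0 \<noteq> 0" "\<forall>j\<in>S. re_form G (v j) v0 = 0"
    and v0_ext: "\<And>w. \<forall>j\<in>S. re_form G (v j) w = 0 \<Longrightarrow> re_form G v0 w = 0 \<Longrightarrow> im_form G v0 w = 0"
  shows "congruence_family G (insert a S) (v(a := v0))"
proof -
  from fam have fam_nz: "\<And>i. i \<in> S \<Longrightarrow> v i \<noteq> 0"
    and fam_orth: "\<And>i j. i \<in> S \<Longrightarrow> j \<in> S \<Longrightarrow> i \<noteq> j \<Longrightarrow>
                     re_form G (v i) (v j) = 0 \<and> im_form G (v i) (v j) = 0"
    and fam_ext: "\<And>i w. i \<in> S \<Longrightarrow> \<forall>j\<in>S. re_form G (v j) w = 0 \<Longrightarrow> im_form G (v i) w = 0"
    unfolding congruence_family_def by blast+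
  have v0_orth: "re_form G (v j) v0 = 0" "im_form G (v j) v0 = 0"
                "re_form G v0 (v j) = 0" "im_form G v0 (v j) = 0" if "j \<in> S" for j
    using v0 fam_ext[OF that v0(2)] that re_form_swap[of G v0 "v j"] im_form_swap[of G v0 "v j"]
    by auto
  define v' where "v' = v(a := v0)"
  have v'_S: "v' j = v j" if "j \<in> S" for j
    using a that by (auto simp: v'_def)
  have "\<forall>i\<in>insert a S. v' i \<noteq> 0"
    using fam_nz v0 by (auto simp: v'_def)
  moreover have "\<forall>i\<in>insert a S. \<forall>j\<in>insert a S. i \<noteq> j \<longrightarrow>
                   re_form G (v' i) (v' j) = 0 \<and> im_form G (v' i) (v' j) = 0"
    using fam_orth v0_orth a by (auto simp: v'_def)
  moreover have "\<forall>i\<in>insert a S. \<forall>w. (\<forall>j\<in>insert a S. re_form G (v' j) w = 0) \<longrightarrow>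
                   im_form G (v' i) w = 0"
  proof (intro ballI allI impI)
    fix i w assume i: "i \<in> insert a S" and w: "\<forall>j\<in>insert a S. re_form G (v' j) w = 0"
    then have "\<forall>j\<in>S. re_form G (v j) w = 0" "re_form G v0 w = 0"
      by (simp_all add: v'_S, simp add: v'_def)
    then show "im_form G (v' i) w = 0"
      using i a fam_ext v0_ext by (auto simp: v'_def)
  qed
  ultimately show ?thesis
    unfolding congruence_family_def v'_def by blast
qed

lemma congruence_family_insert:
  fixes G :: "complex^'n::finite^'n"
  assumes pos: "\<And>x. x \<noteq> 0 \<Longrightarrow> Re (qform G x) > 0"
    and fam: "congruence_family G S v" and a: "a \<notin> S"
  shows "\<exists>v'. congruence_family G (insert a S) v'"
proof -
  define W where "W = {w. \<forall>j\<in>S. re_form G (v j) w = 0}"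
  define u where "u j = (1/2 :: complex) *s (cadj G *v v j + G *v v j)" for j
  have W_u: "W = (\<Inter>j\<in>S. {w. cinner (u j) w = 0})"
    by (auto simp: W_def u_def re_form_eq_cinner)
  have "closed W"
    unfolding W_u cinner_def by (intro closed_INT ballI closed_Collect_eq continuous_intros)
  moreover obtain w1 where "w1 \<noteq> 0" "w1 \<in> W"
    using exists_nonzero_orthogonal[of S u] a by (auto simp: W_u)
  moreover have "x + y \<in> W" "c *s x \<in> W" if "x \<in> W" "y \<in> W" for x y c
    using that by (simp_all add: W_def re_form_add_right re_form_smult_right)
  ultimately obtain v0 where "v0 \<in> W" "v0 \<noteq> 0"
    and "\<And>w. w \<in> W \<Longrightarrow> re_form G v0 w = 0 \<Longrightarrow> im_form G v0 w = 0"
    using extremal_vector[OF pos, of W w1] by blast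
  then have "congruence_family G (insert a S) (v(a := v0))"
    by (intro congruence_family_extend[OF fam a]) (auto simp: W_def)
  then show ?thesis by blast
qed

lemma congruence_basis_exists:
  fixes G :: "complex^'n::finite^'n"
  assumes pos: "\<And>x. x \<noteq> 0 \<Longrightarrow> Re (qform G x) > 0"
  obtains v :: "'n \<Rightarrow> complex^'n"
  where "\<And>i. v i \<noteq> 0" "\<And>i j. i \<noteq> j \<Longrightarrow> cinner (v i) (G *v v j) = 0"
proof -
  have "\<exists>v. congruence_family G S v" for S :: "'n set"
    using finite[of S]
  proof (induction S rule: finite_induct)
    case empty
    then show ?case by (simp add: congruence_family_def)
  next
    case (insert a S)
    then show ?case using congruence_family_insert[OF pos] by blast
  qed
  then obtain v where "congruence_family G UNIV v" by blast
  then show thesis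
    by (intro that[of v]) (simp_all add: congruence_family_def cinner_eq_re_form_im_form)
qed

lemma congruence_diagonalisation:
  fixes G :: "complex^'n::finite^'n"
  assumes pos: "\<And>x. x \<noteq> 0 \<Longrightarrow> Re (qform G x) > 0"
  shows "\<exists>L \<delta>. invertible L \<and> G = cadj L ** cdiag \<delta> ** L \<and> (\<forall>k. Re (\<delta> k) > 0)"
proof -
  obtain v :: "'n \<Rightarrow> complex^'n"
    where v0: "\<And>i. v i \<noteq> 0" and v_orth: "\<And>i j. i \<noteq> j \<Longrightarrow> cinner (v i) (G *v v j) = 0"
    using congruence_basis_exists[OF pos] by blast
  define V :: "complex^'n^'n" where "V = (\<chi> i j. v j $ i)"
  define \<delta> where "\<delta> k = qform G (v k)" for k
  have \<delta>_pos: "Re (\<delta> k) > 0" for k using pos[OF v0[of k]] by (simp add: \<delta>_def)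
  have \<delta>0: "\<delta> k \<noteq> 0" for k using \<delta>_pos[of k] by auto
  have VGV: "cadj V ** G ** V = cdiag \<delta>"
    unfolding vec_eq_iff V_def by (auto simp: cadj_mult_mult_columns cdiag_def \<delta>_def v_orth)
  have "(cdiag (\<lambda>k. 1 / \<delta> k) ** cadj V ** G) ** V = mat 1"
    by (simp add: matrix_mul_assoc[symmetric] VGV[unfolded matrix_mul_assoc[symmetric]]
        cdiag_mult \<delta>0 cdiag_one)
  then have "invertible V" using invertible_left_inverse by blast
  then obtain L where VL: "V ** L = mat 1" and LV: "L ** V = mat 1"
    unfolding invertible_def by blast
  have "cadj L ** cdiag \<delta> ** L = cadj (V ** L) ** G ** (V ** L)"
    by (simp add: VGV[symmetric] cadj_mult matrix_mul_assoc)
  then have "G = cadj L ** cdiag \<delta> ** L"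
    by (simp add: VL cadj_mat_one)
  moreover have "invertible L" unfolding invertible_def using VL LV by blast
  ultimately show ?thesis using \<delta>_pos by blast
qed

section \<open>Existence of the sectorial decomposition\<close>

lemma unimodular_diagonal_congruence:
  fixes L :: "complex^'n::finite^'n"
  assumes L: "invertible L" and \<rho>: "\<And>k. \<rho> k > 0"
  shows "\<exists>T. invertible T \<and>
           cadj L ** cdiag (\<lambda>k. rcis (\<rho> k) (\<phi> k)) ** L = cadj T ** cdiag (\<lambda>k. cis (\<phi> k)) ** T"
proof -
  define s where "s k = complex_of_real (sqrt (\<rho> k))" for k
  have "invertible (cdiag s ** L)"
    using \<rho> by (intro invertible_mult L invertible_cdiag) (simp add: s_def less_imp_neq[symmetric])
  moreover have "cadj (cdiag s) = cdiag s" unfolding s_def by (simp add: cadj_cdiag)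
  then have "cadj (cdiag s ** L) ** cdiag (\<lambda>k. cis (\<phi> k)) ** (cdiag s ** L) =
             cadj L ** (cdiag s ** cdiag (\<lambda>k. cis (\<phi> k)) ** cdiag s) ** L"
    by (simp add: cadj_mult matrix_mul_assoc)
  moreover have "cdiag s ** cdiag (\<lambda>k. cis (\<phi> k)) ** cdiag s = cdiag (\<lambda>k. rcis (\<rho> k) (\<phi> k))"
    using \<rho> by (simp add: cdiag_mult s_def rcis_def abs_of_pos mult_ac flip: of_real_mult)
  ultimately show ?thesis by metis
qed

lemma phases_normalise:
  fixes \<phi>0 :: "'n::finite \<Rightarrow> real"
  assumes b: "\<And>k. c - pi/2 < \<phi>0 k" "\<And>k. \<phi>0 k < c + pi/2"
  shows "\<exists>\<phi>. (\<forall>k. cis (\<phi> k) = cis (\<phi>0 k)) \<and> Max (range \<phi>) - Min (range \<phi>) < pi \<and>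
     -pi < (Max (range \<phi>) + Min (range \<phi>)) / 2 \<and> (Max (range \<phi>) + Min (range \<phi>)) / 2 \<le> pi"
proof -
  define hi0 where "hi0 = Max (range \<phi>0)"
  define lo0 where "lo0 = Min (range \<phi>0)"
  have "hi0 \<in> range \<phi>0" "lo0 \<in> range \<phi>0" unfolding hi0_def lo0_def
    by (intro Max_in Min_in; simp)+
  then obtain k1 k2 where "hi0 = \<phi>0 k1" "lo0 = \<phi>0 k2" by blast
  then have spread: "hi0 - lo0 < pi" using b[of k1] b[of k2] by simp
  define m where "m = (hi0 + lo0) / 2"
  define t where "t = 2 * pi * of_int \<lfloor>(pi - m) / (2*pi)\<rfloor>"
  have t: "t \<le> pi - m" "pi - m < t + 2*pi"
    using floor_divide_lower[of "2*pi" "pi - m"] floor_divide_upper[of "2*pi" "pi - m"]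
    unfolding t_def by (simp_all add: algebra_simps)
  define \<phi> where "\<phi> k = \<phi>0 k + t" for k
  have r: "range \<phi> = (\<lambda>k. \<phi>0 k + t) ` UNIV" by (simp add: \<phi>_def)
  have hi: "Max (range \<phi>) = hi0 + t"
    unfolding r hi0_def by (rule Max_add_commute) auto
  have lo: "Min (range \<phi>) = lo0 + t"
    unfolding r lo0_def by (rule Min_add_commute) auto
  have "cis (\<phi> k) = cis (\<phi>0 k)" for k
    unfolding \<phi>_def t_def cis_mult[symmetric] by simp
  moreover have "Max (range \<phi>) - Min (range \<phi>) < pi" using spread hi lo by simp
  moreover have "-pi < (Max (range \<phi>) + Min (range \<phi>)) / 2"
    unfolding hi lo using t m_def by (simp add: field_simps)
  moreover have "(Max (range \<phi>) + Min (range \<phi>)) / 2 \<le> pi"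
    unfolding hi lo using t m_def by (simp add: field_simps)
  ultimately show ?thesis by blast
qed

lemma sectorial_decomposition_exists:
  fixes B :: "complex^'n::finite^'n"
  assumes "sectorial B"
  shows "\<exists>lo hi. sect_decomp_phases B lo hi"
proof -
  obtain \<mu> where \<mu>: "\<And>x. x \<noteq> 0 \<Longrightarrow> Re (\<mu> * qform B x) > 0"
    using sectorial_rotation_pos_definite[OF assms] by blast
  have "\<mu> \<noteq> 0" using \<mu>[of "axis undefined 1"] by (auto simp: axis_eq_0_iff)
  define G where "G = cdiag (\<lambda>_. \<mu>) ** B"
  have "qform G x = \<mu> * qform B x" for x
    by (simp add: G_def cdiag_const_mult_vector cinner_smult_right)
  then obtain L \<delta> where L: "invertible L" and GL: "G = cadj L ** cdiag \<delta> ** L"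
    and \<delta>: "\<And>k. Re (\<delta> k) > 0"
    using congruence_diagonalisation[of G] \<mu> by auto
  have "B = cdiag (\<lambda>_. 1 / \<mu>) ** G"
    using \<open>\<mu> \<noteq> 0\<close> by (simp add: G_def matrix_mul_assoc cdiag_mult cdiag_one)
  also have "\<dots> = (cdiag (\<lambda>_. 1 / \<mu>) ** cadj L) ** cdiag \<delta> ** L"
    by (simp add: GL matrix_mul_assoc)
  also have "cdiag (\<lambda>_. 1 / \<mu>) ** cadj L = cadj L ** cdiag (\<lambda>_. 1 / \<mu>)"
    by (rule cdiag_const_commute)
  also have "cadj L ** cdiag (\<lambda>_. 1 / \<mu>) ** cdiag \<delta> ** L =
             cadj L ** (cdiag (\<lambda>_. 1 / \<mu>) ** cdiag \<delta>) ** L"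
    by (simp add: matrix_mul_assoc)
  also have "cdiag (\<lambda>_. 1 / \<mu>) ** cdiag \<delta> =
             cdiag (\<lambda>k. rcis (cmod (\<delta> k) / cmod \<mu>) (Arg (\<delta> k) - Arg \<mu>))"
    by (simp add: cdiag_mult rcis_divide[symmetric] rcis_cmod_Arg)
  finally have B: "B = cadj L ** cdiag (\<lambda>k. rcis (cmod (\<delta> k) / cmod \<mu>) (Arg (\<delta> k) - Arg \<mu>)) ** L" .
  have "- Arg \<mu> - pi/2 < Arg (\<delta> k) - Arg \<mu>" "Arg (\<delta> k) - Arg \<mu> < - Arg \<mu> + pi/2" for k
    using \<delta>[of k] Arg_Re_pos[of "\<delta> k"] by auto
  then obtain \<phi> where \<phi>: "\<And>k. cis (\<phi> k) = cis (Arg (\<delta> k) - Arg \<mu>)"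
    and normal: "Max (range \<phi>) - Min (range \<phi>) < pi"
      "-pi < (Max (range \<phi>) + Min (range \<phi>)) / 2" "(Max (range \<phi>) + Min (range \<phi>)) / 2 \<le> pi"
    using phases_normalise[of "- Arg \<mu>" "\<lambda>k. Arg (\<delta> k) - Arg \<mu>"] by blast
  have "B = cadj L ** cdiag (\<lambda>k. rcis (cmod (\<delta> k) / cmod \<mu>) (\<phi> k)) ** L"
    using B \<phi> by (simp add: rcis_def)
  moreover have "cmod (\<delta> k) / cmod \<mu> > 0" for k
  proof -
    have "\<delta> k \<noteq> 0" using \<delta>[of k] by (metis zero_complex.sel(1) less_irrefl)
    then show ?thesis using \<open>\<mu> \<noteq> 0\<close> by simp
  qed
  ultimately obtain T where "invertible T" "B = cadj T ** cdiag (\<lambda>k. cis (\<phi> k)) ** T"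
    using unimodular_diagonal_congruence[OF L, of "\<lambda>k. cmod (\<delta> k) / cmod \<mu>" \<phi>] by auto
  then show ?thesis
    unfolding sect_decomp_phases_def using normal by blast
qed

lemma sect_decomp_phases_phase_min_max:
  assumes "sectorial (B::complex^'n::finite^'n)"
  shows "sect_decomp_phases B (phase_min B) (phase_max B)"
proof -
  obtain lo hi where "sect_decomp_phases B lo hi"
    using sectorial_decomposition_exists[OF assms] by blast
  then have "\<exists>p. sect_decomp_phases B (fst p) (snd p)" by (intro exI[of _ "(lo, hi)"]) simp
  from someI_ex[OF this] show ?thesis unfolding phase_min_def phase_max_def .
qed

section \<open>The quadratic form of a sectorial matrix\<close>

lemma Re_sum_cis_pos:
  fixes n \<phi> :: "'a \<Rightarrow> real"
  assumes I: "finite I" "k0 \<in> I" and n: "\<And>k. k \<in> I \<Longrightarrow> n k \<ge> 0" "n k0 > 0"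
    and \<phi>: "\<And>k. k \<in> I \<Longrightarrow> \<bar>\<phi> k\<bar> < pi / 2"
  shows "Re (\<Sum>k\<in>I. of_real (n k) * cis (\<phi> k)) > 0"
  unfolding Re_sum
proof (rule sum_pos2[OF I])
  have "cos (\<phi> k) > 0" if "k \<in> I" for k
    using \<phi>[OF that] by (intro cos_gt_zero_pi) auto
  then show "0 < Re (of_real (n k0) * cis (\<phi> k0))" "\<And>k. k \<in> I \<Longrightarrow> 0 \<le> Re (of_real (n k) * cis (\<phi> k))"
    using n I by (auto intro!: mult_nonneg_nonneg simp: less_imp_le)
qed

lemma in_interval_if_sin_nonneg:
  fixes \<psi> lo hi :: real
  assumes "lo \<le> hi" "hi - lo < pi" "\<bar>\<psi> - (lo + hi) / 2\<bar> < pi / 2"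
    and "sin (\<psi> - lo) \<ge> 0" "sin (hi - \<psi>) \<ge> 0"
  shows "lo \<le> \<psi> \<and> \<psi> \<le> hi"
proof -
  have "\<psi> < lo \<longrightarrow> 0 < sin (lo - \<psi>)" "hi < \<psi> \<longrightarrow> 0 < sin (\<psi> - hi)"
    using assms(1-3) by (auto intro!: sin_gt_zero simp: abs_less_iff field_simps)
  then show ?thesis
    using assms(4,5) by (metis minus_diff_eq neg_0_le_iff_le sin_minus not_le)
qed

lemma sum_cis_in_sector:
  fixes n \<phi> :: "'a \<Rightarrow> real"
  assumes I: "finite I" "k0 \<in> I" and n: "\<And>k. k \<in> I \<Longrightarrow> n k \<ge> 0" "n k0 > 0"
    and \<phi>: "\<And>k. k \<in> I \<Longrightarrow> lo \<le> \<phi> k \<and> \<phi> k \<le> hi" and spread: "hi - lo < pi"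
  shows "\<exists>\<rho>>0. \<exists>\<psi>\<in>{lo..hi}. (\<Sum>k\<in>I. of_real (n k) * cis (\<phi> k)) = rcis \<rho> \<psi>"
proof -
  define S where "S = (\<Sum>k\<in>I. of_real (n k) * cis (\<phi> k))"
  have rot: "cis (-a) * S = (\<Sum>k\<in>I. of_real (n k) * cis (\<phi> k - a))" for a
    unfolding S_def sum_distrib_left by (rule sum.cong) (auto simp: cis_mult mult_ac)
  define m where "m = (lo + hi) / 2"
  define u where "u = cis (-m) * S"
  have "\<bar>\<phi> k - m\<bar> < pi / 2" if "k \<in> I" for k
    using \<phi>[OF that] spread by (auto simp: m_def abs_less_iff field_simps)
  then have "Re u > 0"
    unfolding u_def rot by (intro Re_sum_cis_pos[where n=n, OF I n])
  then have "\<bar>Arg u\<bar> < pi / 2" "u \<noteq> 0" using Arg_Re_pos by auto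
  define \<psi> where "\<psi> = m + Arg u"
  have "S = cis m * rcis (cmod u) (Arg u)"
    by (simp add: rcis_cmod_Arg u_def mult.assoc[symmetric] cis_mult)
  then have S: "S = rcis (cmod u) \<psi>"
    by (simp add: \<psi>_def rcis_def mult.left_commute cis_mult)
  have Im_rot: "Im (cis (-a) * S) = cmod u * sin (\<psi> - a)" for a
    by (simp add: S rcis_def sin_diff algebra_simps)
  have "sin (\<psi> - lo) \<ge> 0"
  proof -
    have "sin (\<phi> k - lo) \<ge> 0" if "k \<in> I" for k
      using \<phi>[OF that] spread by (intro sin_ge_zero) auto
    then have "Im (cis (-lo) * S) \<ge> 0" unfolding rot Im_sum
      using n by (auto intro!: sum_nonneg mult_nonneg_nonneg)
    then have "cmod u * sin (\<psi> - lo) \<ge> 0" by (simp only: Im_rot)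
    then show ?thesis using \<open>u \<noteq> 0\<close> by (simp add: zero_le_mult_iff)
  qed
  moreover have "sin (hi - \<psi>) \<ge> 0"
  proof -
    have "sin (\<phi> k - hi) \<le> 0" if "k \<in> I" for k
    proof -
      have "sin (hi - \<phi> k) \<ge> 0" using \<phi>[OF that] spread by (intro sin_ge_zero) auto
      then show ?thesis by (metis minus_diff_eq neg_0_le_iff_le sin_minus)
    qed
    then have "Im (cis (-hi) * S) \<le> 0" unfolding rot Im_sum
      using n by (auto intro!: sum_nonpos mult_nonneg_nonpos)
    then have "cmod u * sin (\<psi> - hi) \<le> 0" by (simp only: Im_rot)
    then have "sin (\<psi> - hi) \<le> 0" using \<open>u \<noteq> 0\<close> by (simp add: mult_le_0_iff)
    then show ?thesis by (metis minus_diff_eq neg_0_le_iff_le sin_minus)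
  qed
  moreover have "lo \<le> hi" using \<phi>[OF I(2)] by auto
  moreover have "\<bar>\<psi> - (lo + hi) / 2\<bar> < pi / 2"
    using \<open>\<bar>Arg u\<bar> < pi / 2\<close> by (simp add: \<psi>_def m_def)
  ultimately have "lo \<le> \<psi> \<and> \<psi> \<le> hi"
    using in_interval_if_sin_nonneg[of lo hi \<psi>] spread by blast
  then show ?thesis
    using S \<open>u \<noteq> 0\<close> unfolding S_def by (intro exI[of _ "cmod u"]) auto
qed

lemma qform_in_sector:
  fixes B :: "complex^'n::finite^'n"
  assumes "sect_decomp_phases B lo hi" "x \<noteq> 0"
  shows "\<exists>\<rho>>0. \<exists>\<psi>\<in>{lo..hi}. qform B x = rcis \<rho> \<psi>"
proof -
  obtain T and \<phi> :: "'n \<Rightarrow> real" where T: "invertible T"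
    and B: "B = cadj T ** cdiag (\<lambda>k. cis (\<phi> k)) ** T"
    and range: "hi = Max (range \<phi>)" "lo = Min (range \<phi>)" and spread: "hi - lo < pi"
    using assms(1) unfolding sect_decomp_phases_def by blast
  define w where "w = T *v x"
  have "w \<noteq> 0" using T assms(2) by (auto simp: w_def invertible_iff_trivial_kernel)
  then obtain k0 where "w $ k0 \<noteq> 0" by (auto simp: vec_eq_iff)
  have "qform B x = qform (cdiag (\<lambda>k. cis (\<phi> k))) w"
    using cinner_cadj[of x "cadj T"] by (simp add: B w_def matrix_vector_mul_assoc[symmetric])
  also have "\<dots> = (\<Sum>k\<in>UNIV. of_real ((cmod (w$k))\<^sup>2) * cis (\<phi> k))"
    by (rule qform_cdiag)
  finally show ?thesis
    using sum_cis_in_sector[where I=UNIV and n="\<lambda>k. (cmod (w$k))\<^sup>2"] \<open>w $ k0 \<noteq> 0\<close> range spread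
    by auto
qed

lemma qform_in_Psi:
  fixes B :: "complex^'n::finite^'n"
  assumes "sectorial B" "x \<noteq> 0"
  shows "\<exists>\<rho>>0. \<exists>\<psi>\<in>Psi B. qform B x = rcis \<rho> \<psi>"
  using qform_in_sector[OF sect_decomp_phases_phase_min_max[OF assms(1)] assms(2)]
  by (simp add: Psi_def)

lemma phase_neg_cnj_outside_sector:
  assumes "z \<noteq> 0" "Arg z \<in> {-\<theta><..<\<theta>}" "- cnj z = rcis \<rho> \<psi>" "\<rho> > 0"
  shows "\<psi> \<notin> {-pi + \<theta><..<pi - \<theta>}"
proof
  assume \<psi>: "\<psi> \<in> {-pi + \<theta><..<pi - \<theta>}"
  have "- cnj z = rcis (cmod z) (pi - Arg z)"
    by (subst (1) rcis_cmod_Arg[symmetric]) (simp add: complex_eq_iff cos_diff sin_diff)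
  then have "rcis (cmod z) (pi - Arg z) = rcis \<rho> \<psi>" using assms(3) by simp
  then have "cmod z = \<rho>" using assms(4) by (metis abs_of_pos complex_mod_rcis zero_less_norm_iff assms(1))
  with \<open>rcis (cmod z) (pi - Arg z) = rcis \<rho> \<psi>\<close> have "cis (pi - Arg z) = cis \<psi>"
    using assms(4) by (simp add: rcis_def)
  then have "cis (pi - Arg z - \<psi>) = 1" by (simp add: cis_divide[symmetric])
  then have "cos (pi - Arg z - \<psi>) = 1" by (metis cis.sel(1) one_complex.sel(1))
  then obtain n :: int where n: "pi - Arg z - \<psi> = of_int n * 2 * pi"
    using cos_one_2pi_int by auto
  have "0 < pi - Arg z - \<psi>" "pi - Arg z - \<psi> < 2 * pi" using assms(2) \<psi> by auto
  then have "0 < n" "n < 1" unfolding n by (simp_all add: zero_less_mult_iff)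
  then show False by simp
qed

lemma norm_le_gamma:
  fixes A :: "complex^'n::finite^'n"
  assumes "norm y = 1" "Arg (qform A y) \<notin> {-\<theta><..<\<theta>}"
  shows "norm (A *v y) \<le> gamma \<theta> A"
  unfolding gamma_def
proof (rule cSup_upper)
  show "norm (A *v y) \<in> R_ge \<theta> A"
    unfolding R_ge_def DW_def using assms by (auto intro!: exI[of _ "qform A y"])
  show "bdd_above (R_ge \<theta> A)"
  proof (rule bdd_aboveI)
    fix r assume "r \<in> R_ge \<theta> A"
    then obtain w where "r \<ge> 0" "r\<^sup>2 = (norm (A *v w))\<^sup>2" "norm w = 1"
      unfolding R_ge_def DW_def by auto
    then have "r = norm (A *v w)" using power2_eq_iff_nonneg by fastforce
    also have "\<dots> \<le> onorm ((*v) A) * norm w" by (rule onorm) simp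
    finally show "r \<le> onorm ((*v) A)" using \<open>norm w = 1\<close> by simp
  qed
qed

lemma norm_le_sigma_max: "norm (B *v x) \<le> sigma_max B * norm x"
  unfolding sigma_max_def by (rule onorm) simp

lemma sigma_max_nonneg: "sigma_max B \<ge> 0"
  unfolding sigma_max_def by (rule onorm_pos_le) simp

lemma nonzero_kernel_vector_one_plus_mult:
  fixes A B :: "complex^'n::finite^'n"
  assumes "\<not> invertible (mat 1 + A ** B)"
  obtains x y where "x \<noteq> 0" "norm y = 1" "B *v x = y" "A *v y = - x"
proof -
  obtain x0 where "x0 \<noteq> 0" "x0 + A *v (B *v x0) = 0"
    using assms by (auto simp: invertible_iff_trivial_kernel matrix_vector_mult_add_rdistrib
        matrix_vector_mul_assoc)
  moreover have "B *v x0 \<noteq> 0" using calculation by auto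
  ultimately show thesis
    by (intro that[of "(1 / norm (B *v x0)) *\<^sub>R x0"])
      (auto simp: matrix_vector_mult_scaleR_complex eq_neg_iff_add_eq_0 add.commute simp flip: scaleR_add_right)
qed

theorem theorem6:
  fixes A B :: "complex^'n::finite^'n"
  assumes "sectorial A" and "sectorial B"
    and "\<exists>\<theta>. \<theta> \<in> {0..<pi} \<inter> Psi A \<and> gamma \<theta> A * sigma_max B < 1
              \<and> Psi B \<subseteq> {-pi + \<theta> <..< pi - \<theta>}"
  shows "invertible (mat 1 + A ** B)"
proof (rule ccontr)
  assume "\<not> invertible (mat 1 + A ** B)"
  then obtain x y where x: "x \<noteq> 0" and y: "norm y = 1" and Bx: "B *v x = y" and Ay: "A *v y = - x"
    by (rule nonzero_kernel_vector_one_plus_mult)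
  obtain \<theta> where small: "gamma \<theta> A * sigma_max B < 1" and Psi_B: "Psi B \<subseteq> {-pi + \<theta><..<pi - \<theta>}"
    using assms(3) by blast
  show False
  proof (cases "Arg (qform A y) \<in> {-\<theta><..<\<theta>}")
    case True
    have "qform A y \<noteq> 0" using assms(1) y by (auto simp: sectorial_def num_range_def)
    moreover have "qform B x = - cnj (qform A y)"
      using Bx Ay by (metis cinner_minus_left cnj_cinner minus_minus)
    moreover obtain \<rho> \<psi> where "\<rho> > 0" "\<psi> \<in> Psi B" "qform B x = rcis \<rho> \<psi>"
      using qform_in_Psi[OF assms(2) x] by blast
    ultimately show False using phase_neg_cnj_outside_sector[OF _ True] Psi_B by force
  next
    case False
    have "1 = norm (B *v x)" using Bx y by simp
    also have "\<dots> \<le> sigma_max B * norm (A *v y)" using norm_le_sigma_max Ay by simp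
    also have "\<dots> \<le> sigma_max B * gamma \<theta> A"
      using norm_le_gamma[OF y False] sigma_max_nonneg by (rule mult_left_mono)
    finally show False using small by (simp add: mult.commute)
  qed
qed

end
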